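(* Consider the altruistic planner's one-step (myopic) problem described in the context: for each public belief $b\in[0,1]$, maximize $r_A(b,q)=-\beta(q)-C\min(b,1-b,1-q)$ over $q\in[0.5,1]$. Define $$t_M=\begin{cases}\frac{\beta(1)}{C}, & \beta(1)<C(1-p),\\ 0.5, & \text{otherwise.}\end{cases}$$ Then the optimal myopic altruistic policy $\pi^0_A$ (a function with $\pi^0_A(b)\in\arg\sup_{q\in[0.5,1]} r_A(b,q)$ for every $b\in[0,1]$) is given by $$\pi^0_A(b)=\begin{cases}1, & b\in(t_M,1-t_M),\\ p, & \text{otherwise.}\end{cases}$$
   Context: Sequential social learning model: a binary state $\omega\in\{G,B\}$ is drawn once with $\mathbb{P}(\omega=G)=b_1$. Agents $i=1,2,\dots$ act in sequence. Before agent $i$ acts, a planner chooses a signal precision $q_i\in[0.5,1]$; agent $i$ receives a private binary signal $s_i\in\{G,B\}$ with $\mathbb{P}(s_i=\omega)=q_i$, signals being conditionally independent given $\omega$. Given the public belief $b_i$ (probability of $G$ given past precisions and actions), agent $i$ chooses $a_i=s_i$ if $1-q_i\le b_i\le q_i$, $a_i=G$ if $b_i>q_i$, and $a_i=B$ if $b_i<1-q_i$. An agent whose action differs from $\omega$ incurs cost $C>0$; the probability of this is $\min(b_i,1-b_i,1-q_i)$. The altruistic planner has a baseline precision $p\in[0.5,1)$ and a precision-cost function $\beta:[0.5,1]\to[0,\infty)$ that is non-negative, increasing, continuous and concave with $\beta(p)=0$. Its instantaneous reward for choosing precision $q$ at public belief $b$ is $r_A(b,q)=-\beta(q)-C\min(b,1-b,1-q)$.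 *)

theory Defs
  imports "HOL-Analysis.Analysis"
begin

definition r_A :: "(real \<Rightarrow> real) \<Rightarrow> real \<Rightarrow> real \<Rightarrow> real \<Rightarrow> real" where
  "r_A \<beta> C b q = - \<beta> q - C * min b (min (1 - b) (1 - q))"

definition t_M :: "(real \<Rightarrow> real) \<Rightarrow> real \<Rightarrow> real \<Rightarrow> real" where
  "t_M \<beta> C p = (if \<beta> 1 < C * (1 - p) then \<beta> 1 / C else 1/2)"

definition pi_A0 :: "(real \<Rightarrow> real) \<Rightarrow> real \<Rightarrow> real \<Rightarrow> real \<Rightarrow> real" where
  "pi_A0 \<beta> C p b = (if b \<in> {t_M \<beta> C p <..< 1 - t_M \<beta> C p} then 1 else p)"

end

theory Submission
  imports Defs
begin

text \<open>For fixed belief b the reward is convex in the precision q on [p, 1] (a concave cost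
  minus a concave minimum), so there it is maximised at p or at 1; below p it is dominated by the
  free precision p. The policy just picks whichever of p and 1 is better, and comparing
  r(1) = -\<beta>(1) with r(p) = -C min(b, 1 - b, 1 - p) yields exactly the threshold t_M.\<close>

lemma concave_on_min:
  assumes "concave_on S f" and "concave_on S g"
  shows "concave_on S (\<lambda>x. min (f x) (g x))"
  unfolding concave_on_iff
proof (intro conjI ballI allI impI)
  show "convex S"
    using assms(1) by (rule concave_on_imp_convex)
next
  fix u v :: real and x y
  assume "x \<in> S" "y \<in> S" "u \<ge> 0" "v \<ge> 0" "u + v = 1"
  then have "u * f x + v * f y \<le> f (u *\<^sub>R x + v *\<^sub>R y)"
    and "u * g x + v * g y \<le> g (u *\<^sub>R x + v *\<^sub>R y)"
    using assms by (auto simp: concave_on_iff)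
  moreover have "u * min (f x) (g x) + v * min (f y) (g y) \<le> min (u * f x + v * f y) (u * g x + v * g y)"
    using \<open>u \<ge> 0\<close> \<open>v \<ge> 0\<close> by (intro min.boundedI add_mono mult_left_mono) auto
  ultimately show "u * min (f x) (g x) + v * min (f y) (g y)
      \<le> min (f (u *\<^sub>R x + v *\<^sub>R y)) (g (u *\<^sub>R x + v *\<^sub>R y))"
    by linarith
qed

lemma convex_on_r_A:
  assumes "C \<ge> 0" and "concave_on S \<beta>"
  shows "convex_on S (r_A \<beta> C b)"
proof -
  have S: "convex S"
    using assms(2) by (rule concave_on_imp_convex)
  have "concave_on S (\<lambda>q. 1 - q)"
    using S by (intro concave_on_diff) (simp_all add: concave_on_const convex_on_ident)
  then have "concave_on S (\<lambda>q. min b (min (1 - b) (1 - q)))"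
    using S by (intro concave_on_min) (simp_all add: concave_on_const)
  then have "concave_on S (\<lambda>q. C * min b (min (1 - b) (1 - q)))"
    by (rule concave_on_cmul[OF assms(1)])
  with assms(2) show ?thesis
    unfolding r_A_def by (intro convex_on_diff) (simp_all add: concave_on_def)
qed

lemma r_A_antimono_below:
  assumes "C \<ge> 0" and "q \<le> p" and "\<beta> p \<le> \<beta> q"
  shows "r_A \<beta> C b q \<le> r_A \<beta> C b p"
proof -
  have "min b (min (1 - b) (1 - p)) \<le> min b (min (1 - b) (1 - q))"
    using assms(2) by linarith
  then have "C * min b (min (1 - b) (1 - p)) \<le> C * min b (min (1 - b) (1 - q))"
    using assms(1) by (rule mult_left_mono)
  then show ?thesis
    using assms(3) by (simp add: r_A_def)
qed

lemma r_A_le_max_p_1: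
  assumes "C \<ge> 0" and "1/2 \<le> p" "p \<le> 1"
    and "\<forall>q\<in>{1/2..1}. \<beta> q \<ge> 0" and "concave_on {1/2..1} \<beta>" and "\<beta> p = 0"
    and q: "q \<in> {1/2..1}"
  shows "r_A \<beta> C b q \<le> max (r_A \<beta> C b p) (r_A \<beta> C b 1)"
proof (cases "q \<le> p")
  case True
  then have "r_A \<beta> C b q \<le> r_A \<beta> C b p"
    using assms by (intro r_A_antimono_below) auto
  then show ?thesis
    by simp
next
  case False
  have "convex_on {p..1} (r_A \<beta> C b)"
    by (rule convex_on_subset[OF convex_on_r_A[OF assms(1,5)]]) (use assms(2) in auto)
  then show ?thesis
    using False q by (intro convex_on_le_max) auto
qed

lemma pi_A0_eq:
  assumes "C > 0"
  shows "pi_A0 \<beta> C p b = (if \<beta> 1 < C * min (min b (1 - b)) (1 - p) then 1 else p)"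
proof (cases "\<beta> 1 < C * (1 - p)")
  case True
  then have "t_M \<beta> C p = \<beta> 1 / C"
    by (simp add: t_M_def)
  moreover have "\<beta> 1 / C < b \<longleftrightarrow> \<beta> 1 < C * b"
    and "b < 1 - \<beta> 1 / C \<longleftrightarrow> \<beta> 1 < C * (1 - b)"
    using assms by (simp_all add: field_simps)
  ultimately show ?thesis
    using True assms by (simp add: pi_A0_def min_mult_distrib_left)
next
  case False
  have "C * min (min b (1 - b)) (1 - p) \<le> C * (1 - p)"
    using assms by (intro mult_left_mono) auto
  then show ?thesis
    using False by (simp add: pi_A0_def t_M_def)
qed

lemma r_A_pi_A0:
  assumes "C > 0" and "b \<in> {0..1}" and "\<beta> p = 0"
  shows "r_A \<beta> C b (pi_A0 \<beta> C p b) = max (r_A \<beta> C b p) (r_A \<beta> C b 1)"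
proof -
  have "r_A \<beta> C b 1 = - \<beta> 1"
    using assms(2) by (simp add: r_A_def)
  moreover have "r_A \<beta> C b p = - C * min (min b (1 - b)) (1 - p)"
    using assms(3) by (simp add: r_A_def min.assoc)
  ultimately show ?thesis
    using assms(1) by (simp add: pi_A0_eq max_def)
qed

theorem theorem1:
  fixes \<beta> :: "real \<Rightarrow> real" and C p :: real
  assumes C_pos: "C > 0"
    and p_range: "1/2 \<le> p" "p < 1"
    and beta_nonneg: "\<forall>q\<in>{1/2..1}. \<beta> q \<ge> 0"
    and beta_mono: "mono_on {1/2..1} \<beta>"
    and beta_cont: "continuous_on {1/2..1} \<beta>"
    and beta_concave: "concave_on {1/2..1} \<beta>"
    and beta_p: "\<beta> p = 0"
  shows "\<forall>b\<in>{0..1}. is_arg_max (r_A \<beta> C b) (\<lambda>q. q \<in> {1/2..1}) (pi_A0 \<beta> C p b)"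
proof
  fix b :: real
  assume b: "b \<in> {0..1}"
  have "pi_A0 \<beta> C p b \<in> {1/2..1}"
    using p_range by (simp add: pi_A0_def)
  moreover have "r_A \<beta> C b (pi_A0 \<beta> C p b) = max (r_A \<beta> C b p) (r_A \<beta> C b 1)"
    using C_pos b beta_p by (rule r_A_pi_A0)
  moreover have "r_A \<beta> C b q \<le> max (r_A \<beta> C b p) (r_A \<beta> C b 1)" if "q \<in> {1/2..1}" for q
    using C_pos p_range beta_nonneg beta_concave beta_p that by (intro r_A_le_max_p_1) auto
  ultimately show "is_arg_max (r_A \<beta> C b) (\<lambda>q. q \<in> {1/2..1}) (pi_A0 \<beta> C p b)"
    by (simp add: is_arg_max_linorder)
qed

end
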